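(* Let $G$ be a unicyclic graph on $n$ vertices (a connected graph containing exactly one cycle). (i) If the cycle of $G$ has $2k+1$ vertices, then $P_{DP}(G,m)=P(G,m)$ for every $m\in\mathbb{N}$. (ii) If the cycle of $G$ has $2k+2$ vertices, then for every integer $m\geq 2$, $$P_{DP}(G,m)=(m-1)^n-(m-1)^{n-2k-2}.$$
   Context: All graphs are finite and simple. $P(G,m)$ denotes the chromatic polynomial of $G$. A cover of a graph $G$ is a pair $\mathcal{H}=(L,H)$ where $H$ is a graph and $L:V(G)\to\mathcal{P}(V(H))$ satisfies: (1) the sets $L(u)$, $u\in V(G)$, partition $V(H)$; (2) for every $u$, $H[L(u)]$ is complete; (3) if $E_H(L(u),L(v))\neq\emptyset$ then $u=v$ or $uv\in E(G)$; (4) if $uv\in E(G)$ then $E_H(L(u),L(v))$ is a matching (possibly empty). Here $E_H(S,U)$ is the set of edges of $H$ between $S$ and $U$. The cover is $m$-fold if $|L(u)|=m$ for all $u$. An $\mathcal{H}$-coloring is an independent set of $H$ of size $|V(G)|$. $P_{DP}(G,\mathcal{H})$ is the number of $\mathcal{H}$-colorings, and $P_{DP}(G,m)$ is the minimum of $P_{DP}(G,\mathcal{H})$ over all $m$-fold covers $\mathcal{H}$ of $G$. *)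

theory Defs
  imports Main "HOL-Library.FuncSet"
begin

definition simple_graph :: "'v set \<Rightarrow> 'v set set \<Rightarrow> bool" where
  "simple_graph V E \<longleftrightarrow> finite V \<and>
     (\<forall>e\<in>E. \<exists>u v. u \<noteq> v \<and> u \<in> V \<and> v \<in> V \<and> e = {u, v})"

definition connected_graph :: "'v set \<Rightarrow> 'v set set \<Rightarrow> bool" where
  "connected_graph V E \<longleftrightarrow> V \<noteq> {} \<and>
     (\<forall>u\<in>V. \<forall>v\<in>V. (u, v) \<in> {(x, y). {x, y} \<in> E}\<^sup>*)"

definition is_cycle :: "'v set \<Rightarrow> 'v set set \<Rightarrow> 'v list \<Rightarrow> bool" where
  "is_cycle V E xs \<longleftrightarrow> length xs \<ge> 3 \<and> distinct xs \<and> set xs \<subseteq> V \<and>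
     (\<forall>i < length xs. {xs ! i, xs ! ((i + 1) mod length xs)} \<in> E)"

definition cycle_edges :: "'v list \<Rightarrow> 'v set set" where
  "cycle_edges xs = {{xs ! i, xs ! ((i + 1) mod length xs)} | i. i < length xs}"

definition unicyclic :: "'v set \<Rightarrow> 'v set set \<Rightarrow> bool" where
  "unicyclic V E \<longleftrightarrow> simple_graph V E \<and> connected_graph V E \<and>
     card {cycle_edges xs | xs. is_cycle V E xs} = 1"

definition chrom_poly :: "'v set \<Rightarrow> 'v set set \<Rightarrow> nat \<Rightarrow> nat" where
  "chrom_poly V E m = card {f \<in> V \<rightarrow>\<^sub>E {..<m}. \<forall>u v. {u, v} \<in> E \<longrightarrow> f u \<noteq> f v}"

definition edges_between :: "'w set set \<Rightarrow> 'w set \<Rightarrow> 'w set \<Rightarrow> 'w set set" where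
  "edges_between EH S U = {e \<in> EH. \<exists>x\<in>S. \<exists>y\<in>U. e = {x, y}}"

definition is_matching :: "'w set set \<Rightarrow> bool" where
  "is_matching M \<longleftrightarrow> (\<forall>e\<in>M. \<forall>e'\<in>M. e \<noteq> e' \<longrightarrow> e \<inter> e' = {})"

definition is_cover :: "'v set \<Rightarrow> 'v set set \<Rightarrow> ('v \<Rightarrow> 'w set) \<Rightarrow> 'w set \<Rightarrow> 'w set set \<Rightarrow> bool" where
  "is_cover V E L VH EH \<longleftrightarrow> simple_graph VH EH \<and>
     VH = (\<Union>u\<in>V. L u) \<and>
     (\<forall>u\<in>V. \<forall>v\<in>V. u \<noteq> v \<longrightarrow> L u \<inter> L v = {}) \<and>
     (\<forall>u\<in>V. \<forall>x\<in>L u. \<forall>y\<in>L u. x \<noteq> y \<longrightarrow> {x, y} \<in> EH) \<and>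
     (\<forall>u\<in>V. \<forall>v\<in>V. edges_between EH (L u) (L v) \<noteq> {} \<longrightarrow> u = v \<or> {u, v} \<in> E) \<and>
     (\<forall>u\<in>V. \<forall>v\<in>V. {u, v} \<in> E \<longrightarrow> is_matching (edges_between EH (L u) (L v)))"

definition is_m_fold_cover :: "'v set \<Rightarrow> 'v set set \<Rightarrow> nat \<Rightarrow> ('v \<Rightarrow> 'w set) \<Rightarrow> 'w set \<Rightarrow> 'w set set \<Rightarrow> bool" where
  "is_m_fold_cover V E m L VH EH \<longleftrightarrow> is_cover V E L VH EH \<and> (\<forall>u\<in>V. card (L u) = m)"

definition independent_set :: "'w set \<Rightarrow> 'w set set \<Rightarrow> 'w set \<Rightarrow> bool" where
  "independent_set VH EH I \<longleftrightarrow> I \<subseteq> VH \<and> (\<forall>x\<in>I. \<forall>y\<in>I. {x, y} \<notin> EH)"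

text \<open>Number of H-colourings: independent sets of H of size |V(G)|.\<close>
definition P_DP_cover :: "'v set \<Rightarrow> ('w set \<times> 'w set set) \<Rightarrow> nat" where
  "P_DP_cover V H = card {I. independent_set (fst H) (snd H) I \<and> card I = card V}"

text \<open>Cover vertices are taken from
  the type 'v \<times> nat, which is big enough to contain an isomorphic copy of every
  m-fold cover of a finite graph.\<close>
definition P_DP :: "'v set \<Rightarrow> 'v set set \<Rightarrow> nat \<Rightarrow> nat" where
  "P_DP V E m = Inf {P_DP_cover V (VH, EH) | (L :: 'v \<Rightarrow> ('v \<times> nat) set) VH EH.
                       is_m_fold_cover V E m L VH EH}"

end

theory Submission
  imports Defs "HOL-Library.Transitive_Closure_Table"
begin

text \<open>Let v_0, ..., v_(l-1) be the cycle of G. Since G is connected and has no other cycle, V is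
  obtained from the cycle by adding pendant vertices one at a time. In an m-fold cover, a colouring of
  the vertices added so far extends to a new pendant vertex in at least m - 1 ways, because its unique
  neighbour blocks at most one vertex of its fibre through the matching. Hence every cover has at least
  (m-1)^(n-l) times as many colourings as its restriction to the cycle, with equality when all matchings
  towards pendant vertices are perfect.

  On the cycle, colourings are closed walks through the fibres L(v_0), ..., L(v_(l-1)). Tracking the
  number of walks ending at each vertex of a fibre shows that every m-fold cover of an l-cycle has at
  least (m-1)^l - 1 colourings if l is even and (m-1)^l - (m-1) if l is odd. The cover with identity
  matchings, whose colourings are the proper m-colourings, attains the odd bound; twisting the matching
  on one edge of the cycle by a cyclic shift attains the even one.\<close>

lemma simple_graph_edgeD:
  assumes "simple_graph V E" "{u, v} \<in> E"
  shows "u \<noteq> v" "u \<in> V" "v \<in> V"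
  using assms unfolding simple_graph_def by (auto simp: doubleton_eq_iff)

lemma simple_graph_no_loop: "simple_graph V E \<Longrightarrow> {u, u} \<notin> E"
  by (metis simple_graph_edgeD(1))

lemma rtrancl_edge_leaving:
  assumes "(u, v) \<in> {(x, y). {x, y} \<in> E}\<^sup>*" "u \<in> W" "v \<notin> W"
  shows "\<exists>a b. a \<in> W \<and> b \<notin> W \<and> {a, b} \<in> E"
  using assms
proof (induction rule: rtrancl_induct)
  case (step y z)
  then show ?case by (cases "y \<in> W") auto
qed simp

lemma is_matchingD: "is_matching M \<Longrightarrow> e \<in> M \<Longrightarrow> e' \<in> M \<Longrightarrow> x \<in> e \<Longrightarrow> x \<in> e' \<Longrightarrow> e = e'"
  unfolding is_matching_def by blast

lemma card_Diff_insert_step: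
  assumes "finite V" "W \<subseteq> V" "v \<in> V - W"
  shows "card (V - insert v W) < card (V - W)" "card V - card W = Suc (card V - card (insert v W))"
proof -
  show "card (V - insert v W) < card (V - W)"
    using assms by (metis Diff_insert card_Diff1_less finite_Diff)
  have "card W < card V" using assms by (metis DiffD1 DiffD2 psubsetI psubset_card_mono subsetD)
  moreover have "card (insert v W) = Suc (card W)" using assms finite_subset by fastforce
  ultimately show "card V - card W = Suc (card V - card (insert v W))" by linarith
qed

lemma sum_sum_filter_swap:
  fixes f :: "'a \<Rightarrow> 'c::comm_semiring_1"
  assumes "finite A" "finite Z"
  shows "(\<Sum>z\<in>Z. \<Sum>y\<in>{y \<in> A. P y z}. f y) = (\<Sum>y\<in>A. f y * of_nat (card {z \<in> Z. P y z}))"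
proof -
  have "(\<Sum>z\<in>Z. \<Sum>y\<in>{y \<in> A. P y z}. f y) = (\<Sum>z\<in>Z. \<Sum>y\<in>A. if P y z then f y else 0)"
    using assms by (intro sum.cong refl sum.inter_filter)
  also have "\<dots> = (\<Sum>y\<in>A. \<Sum>z\<in>Z. if P y z then f y else 0)" by (rule sum.swap)
  also have "\<dots> = (\<Sum>y\<in>A. \<Sum>z\<in>{z \<in> Z. P y z}. f y)"
    using assms by (intro sum.cong refl sum.inter_filter[symmetric])
  finally show ?thesis by (simp add: mult.commute)
qed

text \<open>For n \<ge> 3, M * min_walks M n is the minimum number of colourings of an M-fold cover of the
  n-cycle, and min_walks M j bounds the number of walks of length j ending at a given vertex of an
  M-fold cover of a path.\<close>
fun min_walks :: "int \<Rightarrow> nat \<Rightarrow> int" where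
  "min_walks M 0 = 0"
| "min_walks M (Suc 0) = 0"
| "min_walks M (Suc (Suc n)) = min_walks M n + (M - 2) * (M - 1) ^ n"

lemma min_walks_closed: "M * min_walks M n = (M - 1) ^ n - (if even n then 1 else M - 1)"
proof (induction M n rule: min_walks.induct)
  case (3 M n)
  have "M * min_walks M (Suc (Suc n)) = M * min_walks M n + M * (M - 2) * (M - 1) ^ n"
    by (simp add: algebra_simps)
  also have "\<dots> = (M - 1) ^ Suc (Suc n) - (if even (Suc (Suc n)) then 1 else M - 1)"
    using 3 by (simp add: algebra_simps power2_eq_square)
  finally show ?case .
qed auto

text \<open>path_count M j is the number of proper M-colourings of a path with j edges whose two end
  colours are prescribed and distinct.\<close>
fun path_count :: "int \<Rightarrow> nat \<Rightarrow> int" where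
  "path_count M 0 = 0"
| "path_count M (Suc j) = (M - 1) ^ j - path_count M j"

lemma path_count_closed: "M * path_count M j + (-1) ^ j = (M - 1) ^ j"
proof (induction j)
  case (Suc j)
  have "M * path_count M (Suc j) + (-1) ^ Suc j = M * (M - 1) ^ j - (M * path_count M j + (-1) ^ j)"
    by (simp add: algebra_simps)
  also have "\<dots> = (M - 1) ^ Suc j" using Suc by (simp add: algebra_simps)
  finally show ?case .
qed simp

lemma sum_remove_indicator:
  fixes a e :: int
  assumes "i0 < m" "k < m"
  shows "(\<Sum>i\<in>{..<m} - {k}. a + (if i = i0 then e else 0)) = int m * a + e - (a + (if k = i0 then e else 0))"
proof -
  have "(\<Sum>i<m. a + (if i = i0 then e else 0)) = int m * a + e"
    using assms(1) by (simp add: sum.distrib)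
  then show ?thesis using assms(2) by (simp add: sum_diff1)
qed

definition twist :: "bool \<Rightarrow> nat \<Rightarrow> nat \<Rightarrow> nat" where
  "twist tw m i = (if tw then Suc i mod m else i)"

lemma twist_less: "i < m \<Longrightarrow> twist tw m i < m"
  unfolding twist_def by auto

lemma twist_inj: "i < m \<Longrightarrow> i' < m \<Longrightarrow> twist tw m i = twist tw m i' \<Longrightarrow> i = i'"
  unfolding twist_def by (auto simp: mod_Suc split: if_splits)

section \<open>Unicyclic graphs\<close>

locale unicyclic_graph =
  fixes V :: "'v set" and E :: "'v set set" and xs :: "'v list"
  assumes unicyclic: "unicyclic V E" and cycle: "is_cycle V E xs"
begin

abbreviation "l \<equiv> length xs"
abbreviation "S \<equiv> set xs"
abbreviation "cycle_first \<equiv> xs ! 0"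
abbreviation "cycle_last \<equiv> xs ! (l - 1)"

lemma simple: "simple_graph V E"
  and connected: "connected_graph V E"
  using unicyclic unfolding unicyclic_def by simp_all

lemma finite_V: "finite V"
  using simple unfolding simple_graph_def by simp

lemma no_loop: "{u, u} \<notin> E"
  using simple_graph_no_loop[OF simple] .

lemma length_ge_3: "l \<ge> 3" and distinct_cycle: "distinct xs" and cycle_subset: "S \<subseteq> V"
  and cycle_edge: "\<And>i. i < l \<Longrightarrow> {xs ! i, xs ! ((i + 1) mod l)} \<in> E"
  using cycle unfolding is_cycle_def by auto

lemma length_pos: "0 < l"
  using length_ge_3 by linarith

lemma cycle_nth_in_V: "i < l \<Longrightarrow> xs ! i \<in> V"
  using cycle_subset nth_mem by blast

lemma cycle_edge_Suc: "Suc i < l \<Longrightarrow> {xs ! i, xs ! Suc i} \<in> E"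
  using cycle_edge[of i] by simp

lemma cycle_edge_last: "{cycle_last, cycle_first} \<in> E"
proof -
  have "l - 1 + 1 = l" using length_ge_3 by simp
  then show ?thesis using cycle_edge[of "l - 1"] length_ge_3 by simp
qed

lemma card_cycle: "card S = l"
  using distinct_card[OF distinct_cycle] .

lemma length_le_card_V: "l \<le> card V"
  using card_mono[OF finite_V cycle_subset] card_cycle by simp

lemma cycle_edges_unique:
  assumes "is_cycle V E ys"
  shows "cycle_edges ys = cycle_edges xs"
proof -
  have "card {cycle_edges xs | xs. is_cycle V E xs} = 1"
    using unicyclic unfolding unicyclic_def by simp
  then obtain c where c: "{cycle_edges xs | xs. is_cycle V E xs} = {c}"
    by (rule card_1_singletonE)
  have "cycle_edges ys = c" "cycle_edges xs = c" using assms cycle c by blast+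
  then show ?thesis by simp
qed

lemma mem_cycle_edges: "i < length ys \<Longrightarrow> {ys ! i, ys ! ((i + 1) mod length ys)} \<in> cycle_edges ys"
  unfolding cycle_edges_def by blast

lemma cycle_edge_in_cycle: "e \<in> cycle_edges xs \<Longrightarrow> e \<subseteq> S"
proof -
  have "xs \<noteq> []" using length_ge_3 by auto
  then show "e \<in> cycle_edges xs \<Longrightarrow> e \<subseteq> S"
    unfolding cycle_edges_def by (auto intro!: nth_mem)
qed

lemma cycle_segment_is_cycle:
  assumes ij: "i + 1 < j" "j < l" and e: "{xs ! i, xs ! j} \<in> E"
  shows "is_cycle V E (take (j - i + 1) (drop i xs))"
    (is "is_cycle V E ?ys")
  unfolding is_cycle_def
proof (intro conjI allI impI)
  have len: "length ?ys = j - i + 1" using ij by simp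
  have nth: "?ys ! t = xs ! (i + t)" if "t \<le> j - i" for t
    using that ij by simp
  show "3 \<le> length ?ys" using len ij by simp
  show "distinct ?ys" using distinct_cycle by simp
  show "set ?ys \<subseteq> V" using cycle_subset by (meson set_drop_subset set_take_subset subset_trans)
  fix t assume t: "t < length ?ys"
  show "{?ys ! t, ?ys ! ((t + 1) mod length ?ys)} \<in> E"
  proof (cases "t < j - i")
    case True
    then show ?thesis using cycle_edge_Suc[of "i + t"] nth[of t] nth[of "t + 1"] ij len by simp
  next
    case False
    then have "t = j - i" using t len by simp
    moreover have "(t + 1) mod length ?ys = 0" using len calculation by simp
    ultimately show ?thesis using nth[of t] nth[of 0] e ij by (simp add: insert_commute)
  qed
qed

text \<open>A chord would close a second cycle with a segment of the cycle.\<close>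
lemma cycle_chord:
  assumes ij: "i < j" "j < l" and e: "{xs ! i, xs ! j} \<in> E"
  shows "\<exists>t<l. {xs ! i, xs ! j} = {xs ! t, xs ! ((t + 1) mod l)}"
proof -
  consider "j = i + 1" | "i = 0 \<and> j = l - 1" | "i + 1 < j" "\<not> (i = 0 \<and> j = l - 1)"
    using ij by linarith
  then show ?thesis
  proof cases
    case 1 then show ?thesis using ij by (intro exI[of _ i]) auto
  next
    case 2
    then have "Suc (l - Suc 0) = l" using length_ge_3 by simp
    then show ?thesis using 2 length_ge_3 by (intro exI[of _ "l - 1"]) (auto simp: insert_commute)
  next
    case 3
    let ?ys = "take (j - i + 1) (drop i xs)"
    have "{?ys ! (j - i), ?ys ! ((j - i + 1) mod length ?ys)} \<in> cycle_edges ?ys"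
      using ij by (intro mem_cycle_edges) simp
    then have "{xs ! i, xs ! j} \<in> cycle_edges xs"
      using cycle_edges_unique[OF cycle_segment_is_cycle[OF 3(1) ij(2) e]] ij
      by (simp add: insert_commute)
    then show ?thesis unfolding cycle_edges_def by blast
  qed
qed

lemma edge_within_cycle:
  assumes "u \<in> S" "w \<in> S" "{u, w} \<in> E"
  obtains t where "t < l" "{u, w} = {xs ! t, xs ! ((t + 1) mod l)}"
proof -
  obtain i j where i: "i < l" "u = xs ! i" and j: "j < l" "w = xs ! j"
    using assms by (auto simp: in_set_conv_nth)
  have "i \<noteq> j" using assms(3) i j no_loop by auto
  then consider "i < j" | "j < i" by linarith
  then have "\<exists>t<l. {u, w} = {xs ! t, xs ! ((t + 1) mod l)}"
  proof cases
    case 1 then show ?thesis using cycle_chord[of i j] assms i j by simp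
  next
    case 2 then show ?thesis using cycle_chord[of j i] assms i j by (simp add: insert_commute)
  qed
  then show ?thesis using that by blast
qed

definition induced_edge :: "'v set \<Rightarrow> 'v \<Rightarrow> 'v \<Rightarrow> bool" where
  "induced_edge W x y \<longleftrightarrow> {x, y} \<in> E \<and> x \<in> W \<and> y \<in> W"

text \<open>The vertex sets W through which V is built up from the cycle, one pendant vertex at a time.\<close>
definition connected_extension :: "'v set \<Rightarrow> bool" where
  "connected_extension W \<longleftrightarrow> S \<subseteq> W \<and> W \<subseteq> V \<and> (\<forall>w\<in>W. (induced_edge W)\<^sup>*\<^sup>* cycle_first w)"

lemma connected_extension_cycle: "connected_extension S"
proof -
  have "(induced_edge S)\<^sup>*\<^sup>* cycle_first (xs ! i)" if "i < l" for i
    using that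
  proof (induction i)
    case (Suc i)
    then have "induced_edge S (xs ! i) (xs ! Suc i)"
      using cycle_edge_Suc unfolding induced_edge_def by simp
    then show ?case using Suc by (meson Suc_lessD rtranclp.rtrancl_into_rtrancl)
  qed simp
  then show ?thesis unfolding connected_extension_def using cycle_subset by (auto simp: in_set_conv_nth)
qed

lemma connected_extension_insert:
  assumes "connected_extension W" "v \<in> V" "p \<in> W" "{v, p} \<in> E"
  shows "connected_extension (insert v W)"
proof -
  have mono: "(induced_edge (insert v W))\<^sup>*\<^sup>* a b" if "(induced_edge W)\<^sup>*\<^sup>* a b" for a b
    using that by (rule rtranclp_mono[THEN predicate2D, rotated]) (auto simp: induced_edge_def)
  have "induced_edge (insert v W) p v"
    using assms unfolding induced_edge_def by (simp add: insert_commute)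
  moreover have "(induced_edge (insert v W))\<^sup>*\<^sup>* cycle_first p"
    using assms mono unfolding connected_extension_def by blast
  ultimately have "(induced_edge (insert v W))\<^sup>*\<^sup>* cycle_first v"
    by (meson rtranclp.rtrancl_into_rtrancl)
  then show ?thesis using assms mono unfolding connected_extension_def by auto
qed

lemma connected_extension_edge_leaving:
  assumes "connected_extension W" "W \<noteq> V"
  obtains v p where "v \<in> V - W" "p \<in> W" "{v, p} \<in> E"
proof -
  obtain v where v: "v \<in> V" "v \<notin> W" using assms unfolding connected_extension_def by blast
  have "cycle_first \<in> S" using length_ge_3 by (intro nth_mem) auto
  then have x0: "cycle_first \<in> W" "cycle_first \<in> V"
    using assms(1) unfolding connected_extension_def by auto
  then have "(xs ! 0, v) \<in> {(x, y). {x, y} \<in> E}\<^sup>*"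
    using connected v(1) unfolding connected_graph_def by blast
  then obtain a b where "a \<in> W" "b \<notin> W" "{a, b} \<in> E"
    using rtrancl_edge_leaving[OF _ x0(1) v(2)] by blast
  then show ?thesis using that simple_graph_edgeD[OF simple, of a b] by (auto simp: insert_commute)
qed

lemma cycle_through_path:
  assumes path: "rtrancl_path (induced_edge W) a ps b" "distinct (a # ps)" "ps \<noteq> []"
    and W: "W \<subseteq> V" "a \<in> W" and v: "v \<in> V" "v \<notin> W" "{v, a} \<in> E" "{v, b} \<in> E"
  shows "is_cycle V E (v # a # ps)"
  unfolding is_cycle_def
proof (intro conjI allI impI)
  let ?cl = "v # a # ps"
  have psW: "set ps \<subseteq> W"
    using rtrancl_path_Range[OF path(1)] unfolding induced_edge_def by blast
  show "3 \<le> length ?cl" using path(3) by (cases ps) auto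
  show "distinct ?cl" using path(2) psW W v by auto
  show "set ?cl \<subseteq> V" using psW W v by auto
  fix i assume i: "i < length ?cl"
  consider "i = 0" | "0 < i \<and> i < length ps + 1" | "i = length ps + 1"
    using i by fastforce
  then show "{?cl ! i, ?cl ! ((i + 1) mod length ?cl)} \<in> E"
  proof cases
    case 1 then show ?thesis using v by simp
  next
    case 2
    then obtain i' where i': "i = Suc i'" "i' < length ps" by (cases i) auto
    then have "induced_edge W ((a # ps) ! i') (ps ! i')" using rtrancl_path_nth[OF path(1)] by blast
    then show ?thesis using i' unfolding induced_edge_def by simp
  next
    case 3
    then have "?cl ! i = b"
      using rtrancl_path_last[OF path(1,3)] path(3) by (simp add: last_conv_nth)
    then show ?thesis using 3 v by (simp add: insert_commute)
  qed
qed

lemma connected_extension_unique_neighbour: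
  assumes ext: "connected_extension W" and v: "v \<in> V" "v \<notin> W"
    and a: "a \<in> W" "{v, a} \<in> E" and b: "b \<in> W" "{v, b} \<in> E"
  shows "a = b"
proof (rule ccontr)
  assume "a \<noteq> b"
  have "symp (induced_edge W)" by (auto simp: induced_edge_def insert_commute intro: sympI)
  then have "(induced_edge W)\<^sup>*\<^sup>* a cycle_first"
    using ext a by (auto simp: connected_extension_def dest: sympD[OF symp_rtranclp])
  then have "(induced_edge W)\<^sup>*\<^sup>* a b"
    using ext b unfolding connected_extension_def by (meson rtranclp_trans)
  then obtain ps where ps: "rtrancl_path (induced_edge W) a ps b" "distinct (a # ps)"
    by (auto simp: rtranclp_eq_rtrancl_path elim: rtrancl_path_distinct)
  have "ps \<noteq> []" using ps(1) \<open>a \<noteq> b\<close> by (auto elim: rtrancl_path.cases)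
  then have "is_cycle V E (v # a # ps)"
    using cycle_through_path[OF ps] ext a b v unfolding connected_extension_def by blast
  then have "{v, a} \<in> cycle_edges xs"
    using mem_cycle_edges[of 0 "v # a # ps"] cycle_edges_unique by simp
  then show False using cycle_edge_in_cycle ext v unfolding connected_extension_def by blast
qed

lemma connected_extension_grow:
  assumes "connected_extension W" "W \<noteq> V"
  obtains v p where "v \<in> V - W" "p \<in> W" "{v, p} \<in> E"
    "\<And>u. u \<in> W \<Longrightarrow> {v, u} \<in> E \<Longrightarrow> u = p" "connected_extension (insert v W)"
proof -
  obtain v p where v: "v \<in> V - W" and p: "p \<in> W" "{v, p} \<in> E"
    using connected_extension_edge_leaving[OF assms] .
  show ?thesis
  proof (rule that[OF v p])
    show "u = p" if "u \<in> W" "{v, u} \<in> E" for u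
      using connected_extension_unique_neighbour[OF assms(1)] v p that by blast
    show "connected_extension (insert v W)"
      using connected_extension_insert[OF assms(1)] v p by blast
  qed
qed

end

section \<open>Colourings of a cover\<close>

locale unicyclic_cover = unicyclic_graph V E xs for V :: "'v set" and E xs +
  fixes m :: nat and L :: "'v \<Rightarrow> 'w set" and VH :: "'w set" and EH :: "'w set set"
  assumes cover: "is_m_fold_cover V E m L VH EH"
begin

lemma cover_simple: "simple_graph VH EH"
  and VH_eq: "VH = (\<Union>u\<in>V. L u)"
  and L_disjoint: "\<And>u w. u \<in> V \<Longrightarrow> w \<in> V \<Longrightarrow> u \<noteq> w \<Longrightarrow> L u \<inter> L w = {}"
  and L_clique: "\<And>u x y. u \<in> V \<Longrightarrow> x \<in> L u \<Longrightarrow> y \<in> L u \<Longrightarrow> x \<noteq> y \<Longrightarrow> {x, y} \<in> EH"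
  and edges_between_adjacent: "\<And>u w. u \<in> V \<Longrightarrow> w \<in> V \<Longrightarrow>
        edges_between EH (L u) (L w) \<noteq> {} \<Longrightarrow> u = w \<or> {u, w} \<in> E"
  and edges_between_matching: "\<And>u w. u \<in> V \<Longrightarrow> w \<in> V \<Longrightarrow> {u, w} \<in> E \<Longrightarrow>
        is_matching (edges_between EH (L u) (L w))"
  and card_L: "\<And>u. u \<in> V \<Longrightarrow> card (L u) = m"
  using cover unfolding is_m_fold_cover_def is_cover_def by auto

lemma finite_VH: "finite VH"
  using cover_simple unfolding simple_graph_def by simp

lemma L_subset_VH: "u \<in> V \<Longrightarrow> L u \<subseteq> VH"
  using VH_eq by blast

lemma finite_L: "u \<in> V \<Longrightarrow> finite (L u)"
  using L_subset_VH finite_VH finite_subset by blast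

lemma no_loop_H: "{x, x} \<notin> EH"
  using simple_graph_no_loop[OF cover_simple] .

lemma cover_edge_adjacent:
  assumes "u \<in> V" "w \<in> V" "u \<noteq> w" "x \<in> L u" "y \<in> L w" "{x, y} \<in> EH"
  shows "{u, w} \<in> E"
proof -
  have "{x, y} \<in> edges_between EH (L u) (L w)"
    using assms unfolding edges_between_def by blast
  then show ?thesis using edges_between_adjacent[OF assms(1,2)] assms(3) by blast
qed

lemma cover_neighbour_unique:
  assumes "u \<in> V" "w \<in> V" "{u, w} \<in> E" "y \<in> L w" "x1 \<in> L u" "x2 \<in> L u"
    "{x1, y} \<in> EH" "{x2, y} \<in> EH"
  shows "x1 = x2"
proof -
  have "u \<noteq> w" using assms(3) no_loop by blast
  then have "L u \<inter> L w = {}" by (rule L_disjoint[OF assms(1,2)])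
  then have "x1 \<noteq> y" using assms(4,5) by auto
  have "{x1, y} \<in> edges_between EH (L u) (L w)" "{x2, y} \<in> edges_between EH (L u) (L w)"
    using assms unfolding edges_between_def by blast+
  then have "{x1, y} = {x2, y}"
    by (rule is_matchingD[OF edges_between_matching[OF assms(1-3)], where x = y]) auto
  then have "x1 \<in> {x2, y}" by blast
  then show ?thesis using \<open>x1 \<noteq> y\<close> by blast
qed

lemma card_cover_neighbours_le_1:
  assumes "u \<in> V" "w \<in> V" "{u, w} \<in> E" "y \<in> L w"
  shows "card {x \<in> L u. {x, y} \<in> EH} \<le> 1"
  using cover_neighbour_unique[OF assms] finite_L[OF assms(1)]
  by (auto simp: card_le_Suc0_iff_eq)

lemma card_cover_non_neighbours_ge:
  assumes "u \<in> V" "w \<in> V" "{u, w} \<in> E" "y \<in> L w"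
  shows "card {x \<in> L u. {x, y} \<notin> EH} \<ge> m - 1"
proof -
  have "{x \<in> L u. {x, y} \<notin> EH} = L u - {x \<in> L u. {x, y} \<in> EH}" by blast
  then have "card {x \<in> L u. {x, y} \<notin> EH} = card (L u) - card {x \<in> L u. {x, y} \<in> EH}"
    using finite_L[OF assms(1)] by (simp add: card_Diff_subset)
  then show ?thesis using card_L[OF assms(1)] card_cover_neighbours_le_1[OF assms] by simp
qed

definition colourings :: "'v set \<Rightarrow> ('v \<Rightarrow> 'w) set" where
  "colourings W = {c \<in> Pi\<^sub>E W L. \<forall>u\<in>W. \<forall>w\<in>W. {u, w} \<in> E \<longrightarrow> {c u, c w} \<notin> EH}"

lemma colourings_iff: "c \<in> colourings W \<longleftrightarrow>
    (\<forall>u\<in>W. c u \<in> L u) \<and> (\<forall>u. u \<notin> W \<longrightarrow> c u = undefined) \<and>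
    (\<forall>u\<in>W. \<forall>w\<in>W. {u, w} \<in> E \<longrightarrow> {c u, c w} \<notin> EH)"
  unfolding colourings_def PiE_iff extensional_def by auto

lemma finite_colourings:
  assumes "W \<subseteq> V"
  shows "finite (colourings W)"
proof -
  have "finite (Pi\<^sub>E W L)"
    using finite_subset[OF assms finite_V] finite_L assms by (intro finite_PiE) auto
  then show ?thesis unfolding colourings_def by simp
qed

lemma colouring_image_independent:
  assumes "c \<in> colourings V"
  shows "independent_set VH EH (c ` V)" "card (c ` V) = card V"
proof -
  have cL: "\<And>u. u \<in> V \<Longrightarrow> c u \<in> L u" and cE: "\<And>u w. u \<in> V \<Longrightarrow> w \<in> V \<Longrightarrow> {u, w} \<in> E \<Longrightarrow> {c u, c w} \<notin> EH"
    using assms unfolding colourings_iff by auto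
  have "{c u, c w} \<notin> EH" if "u \<in> V" "w \<in> V" for u w
  proof (cases "u = w")
    case False
    then show ?thesis using cE[OF that] cover_edge_adjacent[OF that False cL cL] that by blast
  next
    case True
    then show ?thesis using no_loop_H[of "c u"] by simp
  qed
  then show "independent_set VH EH (c ` V)"
    unfolding independent_set_def using cL L_subset_VH by blast
  have "inj_on c V"
    using cL L_disjoint by (intro inj_onI) (metis disjoint_iff)
  then show "card (c ` V) = card V" by (rule card_image)
qed

lemma independent_meets_each_L_once:
  assumes "independent_set VH EH I" "card I = card V" "u \<in> V"
  shows "\<exists>!x. x \<in> I \<inter> L u"
proof -
  have IVH: "I \<subseteq> VH" and ind: "\<And>x y. x \<in> I \<Longrightarrow> y \<in> I \<Longrightarrow> {x, y} \<notin> EH"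
    using assms(1) unfolding independent_set_def by auto
  have le1: "card (I \<inter> L w) \<le> 1" if "w \<in> V" for w
    using L_clique[OF that] ind finite_L[OF that] by (auto simp: card_le_Suc0_iff_eq)
  have "I = (\<Union>w\<in>V. I \<inter> L w)" using IVH VH_eq by blast
  then have "card I = card (\<Union>w\<in>V. I \<inter> L w)" by simp
  also have "\<dots> = (\<Sum>w\<in>V. card (I \<inter> L w))"
    by (rule card_UN_disjoint) (use finite_V finite_L L_disjoint in auto)
  finally have "card I = (\<Sum>w\<in>V. card (I \<inter> L w))" .
  then have "(\<Sum>w\<in>V. card (I \<inter> L w)) = (\<Sum>w\<in>V. 1)" using assms(2) by simp
  then have "card (I \<inter> L u) = 1"
    using sum_mono_inv[of "\<lambda>w. card (I \<inter> L w)" V "\<lambda>_. 1"] le1 finite_V assms(3) by fastforce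
  then show ?thesis by (metis card_1_singletonE singleton_iff)
qed

lemma independent_set_colouring:
  assumes "independent_set VH EH I" "card I = card V"
  shows "\<exists>c\<in>colourings V. c ` V = I"
proof
  define c where "c u = (if u \<in> V then (THE x. x \<in> I \<inter> L u) else undefined)" for u
  have cu: "c u \<in> I \<inter> L u" if "u \<in> V" for u
    using theI'[OF independent_meets_each_L_once[OF assms that]] that unfolding c_def by simp
  then show "c \<in> colourings V"
    using assms(1) unfolding colourings_iff independent_set_def c_def by auto
  show "c ` V = I"
  proof
    show "I \<subseteq> c ` V"
    proof
      fix x assume x: "x \<in> I"
      then obtain u where u: "u \<in> V" "x \<in> L u"
        using assms(1) VH_eq unfolding independent_set_def by blast
      then have "x = c u" using independent_meets_each_L_once[OF assms u(1)] cu[OF u(1)] x by blast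
      then show "x \<in> c ` V" using u by blast
    qed
  qed (use cu in blast)
qed

lemma P_DP_cover_eq_card_colourings: "P_DP_cover V (VH, EH) = card (colourings V)"
proof -
  have inj: "inj_on (\<lambda>c. c ` V) (colourings V)"
  proof (rule inj_onI)
    fix c c' assume c: "c \<in> colourings V" and c': "c' \<in> colourings V" and eq: "c ` V = c' ` V"
    have "c u = c' u" if "u \<in> V" for u
    proof -
      have "c u \<in> c' ` V" using eq that by (metis imageI)
      then obtain w where w: "w \<in> V" "c u = c' w" by blast
      have "c u \<in> L u" "c' w \<in> L w" using c c' that w(1) unfolding colourings_iff by auto
      have "u = w"
      proof (rule ccontr)
        assume "u \<noteq> w"
        then have "L u \<inter> L w = {}" by (rule L_disjoint[OF that w(1)])
        then show False using \<open>c u \<in> L u\<close> \<open>c' w \<in> L w\<close> w(2) by auto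
      qed
      then show ?thesis using w by simp
    qed
    then show "c = c'" using c c' unfolding colourings_iff by (metis ext)
  qed
  have "(\<lambda>c. c ` V) ` colourings V = {I. independent_set VH EH I \<and> card I = card V}"
    using colouring_image_independent independent_set_colouring by blast
  then have "P_DP_cover V (VH, EH) = card ((\<lambda>c. c ` V) ` colourings V)"
    unfolding P_DP_cover_def by simp
  also have "\<dots> = card (colourings V)" using inj by (rule card_image)
  finally show ?thesis .
qed

lemma colourings_insert_leaf:
  assumes v: "v \<notin> W" and p: "p \<in> W" "{v, p} \<in> E"
    and uniq: "\<And>u. u \<in> W \<Longrightarrow> {v, u} \<in> E \<Longrightarrow> u = p"
  shows "colourings (insert v W) =
    (\<lambda>(c, y). c(v := y)) ` (SIGMA c:colourings W. {y \<in> L v. {y, c p} \<notin> EH})"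
proof
  have pv: "p \<noteq> v" using p v by blast
  have edge_v: "u = p" if "u \<in> W" "{u, v} \<in> E \<or> {v, u} \<in> E" for u
    using uniq that by (auto simp: insert_commute)
  show "colourings (insert v W) \<subseteq> (\<lambda>(c, y). c(v := y)) ` (SIGMA c:colourings W. {y \<in> L v. {y, c p} \<notin> EH})"
  proof
    fix f assume f: "f \<in> colourings (insert v W)"
    have "f(v := undefined) \<in> colourings W"
      using f v unfolding colourings_iff by auto
    moreover have "f v \<in> L v" "{f v, f p} \<notin> EH"
      using f p unfolding colourings_iff by auto
    ultimately show "f \<in> (\<lambda>(c, y). c(v := y)) ` (SIGMA c:colourings W. {y \<in> L v. {y, c p} \<notin> EH})"
      using pv by (intro image_eqI[where x = "(f(v := undefined), f v)"]) auto
  qed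
  show "(\<lambda>(c, y). c(v := y)) ` (SIGMA c:colourings W. {y \<in> L v. {y, c p} \<notin> EH}) \<subseteq> colourings (insert v W)"
  proof clarify
    fix c y assume c: "c \<in> colourings W" and y: "y \<in> L v" "{y, c p} \<notin> EH"
    have "{(c(v := y)) u, (c(v := y)) w} \<notin> EH"
      if uw: "u \<in> insert v W" "w \<in> insert v W" "{u, w} \<in> E" for u w
    proof -
      consider "u = v" "w \<in> W" | "w = v" "u \<in> W" | "u \<in> W" "w \<in> W"
        using uw no_loop by blast
      then show ?thesis
      proof cases
        case 1 then show ?thesis using edge_v[of w] y(2) pv uw(3) by (auto simp: insert_commute)
      next
        case 2 then show ?thesis using edge_v[of u] y(2) pv uw(3) by (auto simp: insert_commute)
      next
        case 3 then show ?thesis using c v uw(3) unfolding colourings_iff by auto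
      qed
    qed
    then show "c(v := y) \<in> colourings (insert v W)"
      using c y unfolding colourings_iff by auto
  qed
qed

lemma card_colourings_insert_leaf:
  assumes W: "W \<subseteq> V" and v: "v \<in> V" "v \<notin> W" and p: "p \<in> W" "{v, p} \<in> E"
    and "\<And>u. u \<in> W \<Longrightarrow> {v, u} \<in> E \<Longrightarrow> u = p"
  shows "card (colourings (insert v W)) = (\<Sum>c\<in>colourings W. card {y \<in> L v. {y, c p} \<notin> EH})"
proof -
  let ?B = "SIGMA c:colourings W. {y \<in> L v. {y, c p} \<notin> EH}"
  have "inj_on (\<lambda>(c, y). c(v := y)) ?B"
  proof (rule inj_onI, clarify)
    fix c y c' y' assume c: "c \<in> colourings W" "c' \<in> colourings W" and eq: "c(v := y) = c'(v := y')"
    have "c v = undefined" "c' v = undefined" using c v(2) unfolding colourings_iff by auto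
    then have "c = (c(v := y))(v := undefined)" "c' = (c'(v := y'))(v := undefined)" by auto
    then show "c = c' \<and> y = y'" using eq by (metis fun_upd_same)
  qed
  moreover have "card (colourings (insert v W)) = card ((\<lambda>(c, y). c(v := y)) ` ?B)"
    using colourings_insert_leaf[OF assms(3-)] by simp
  ultimately have "card (colourings (insert v W)) = card ?B"
    by (simp add: card_image)
  also have "\<dots> = (\<Sum>c\<in>colourings W. card {y \<in> L v. {y, c p} \<notin> EH})"
    using finite_colourings[OF W] finite_L[OF v(1)] by (intro card_SigmaI) auto
  finally show ?thesis .
qed

lemma card_colourings_grow:
  assumes "connected_extension W" "W \<noteq> V"
  obtains v p where "connected_extension (insert v W)" "v \<in> V - W" "p \<in> W" "{v, p} \<in> E"
    "card (colourings (insert v W)) = (\<Sum>c\<in>colourings W. card {y \<in> L v. {y, c p} \<notin> EH})"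
proof -
  obtain v p where v: "v \<in> V - W" and p: "p \<in> W" "{v, p} \<in> E"
    and uniq: "\<And>u. u \<in> W \<Longrightarrow> {v, u} \<in> E \<Longrightarrow> u = p" and ext: "connected_extension (insert v W)"
    using connected_extension_grow[OF assms] by blast
  have "W \<subseteq> V" using assms(1) unfolding connected_extension_def by simp
  then have "card (colourings (insert v W)) = (\<Sum>c\<in>colourings W. card {y \<in> L v. {y, c p} \<notin> EH})"
    using card_colourings_insert_leaf[OF _ _ _ p uniq] v by blast
  then show ?thesis by (rule that[OF ext v p])
qed

text \<open>Each vertex added to a connected extension is a leaf of it, so it multiplies the number of
  colourings by at least m - 1.\<close>
lemma card_colourings_ge:
  assumes "connected_extension W"
  shows "(m - 1) ^ (card V - card W) * card (colourings W) \<le> card (colourings V)"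
  using assms
proof (induction "card (V - W)" arbitrary: W rule: less_induct)
  case less
  show ?case
  proof (cases "W = V")
    case False
    obtain v p where ext: "connected_extension (insert v W)" and v: "v \<in> V - W"
      and p: "p \<in> W" "{v, p} \<in> E"
      and card: "card (colourings (insert v W)) = (\<Sum>c\<in>colourings W. card {y \<in> L v. {y, c p} \<notin> EH})"
      using card_colourings_grow[OF less.prems False] .
    have WV: "W \<subseteq> V" using less.prems unfolding connected_extension_def by simp
    have "(\<Sum>c\<in>colourings W. m - 1) \<le> card (colourings (insert v W))"
      unfolding card using WV v p
      by (intro sum_mono card_cover_non_neighbours_ge) (auto simp: colourings_iff)
    then have step: "(m - 1) * card (colourings W) \<le> card (colourings (insert v W))"
      by (simp add: mult.commute)
    have "(m - 1) ^ (card V - card W) * card (colourings W)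
        = (m - 1) ^ (card V - card (insert v W)) * ((m - 1) * card (colourings W))"
      using card_Diff_insert_step(2)[OF finite_V WV v] by simp
    also have "\<dots> \<le> (m - 1) ^ (card V - card (insert v W)) * card (colourings (insert v W))"
      using step by simp
    also have "\<dots> \<le> card (colourings V)"
      using less.hyps[OF card_Diff_insert_step(1)[OF finite_V WV v] ext] .
    finally show ?thesis .
  qed simp
qed

lemma card_colourings_eq:
  assumes "connected_extension W"
    and leaf: "\<And>W v p c. connected_extension W \<Longrightarrow> v \<in> V - W \<Longrightarrow> p \<in> W \<Longrightarrow> {v, p} \<in> E \<Longrightarrow>
      c \<in> colourings W \<Longrightarrow> card {y \<in> L v. {y, c p} \<notin> EH} = m - 1"
  shows "card (colourings V) = (m - 1) ^ (card V - card W) * card (colourings W)"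
  using assms(1)
proof (induction "card (V - W)" arbitrary: W rule: less_induct)
  case less
  show ?case
  proof (cases "W = V")
    case False
    obtain v p where ext: "connected_extension (insert v W)" and v: "v \<in> V - W"
      and p: "p \<in> W" "{v, p} \<in> E"
      and card: "card (colourings (insert v W)) = (\<Sum>c\<in>colourings W. card {y \<in> L v. {y, c p} \<notin> EH})"
      using card_colourings_grow[OF less.prems False] .
    have WV: "W \<subseteq> V" using less.prems unfolding connected_extension_def by simp
    have "card (colourings (insert v W)) = (m - 1) * card (colourings W)"
      unfolding card using leaf[OF less.prems v p] by simp
    then show ?thesis
      using less.hyps[OF card_Diff_insert_step(1)[OF finite_V WV v] ext] card_Diff_insert_step(2)[OF finite_V WV v]
      by simp
  qed simp
qed

section \<open>Colourings of the cycle\<close>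

lemma finite_L_cycle: "i < l \<Longrightarrow> finite (L (xs ! i))"
  using finite_L cycle_nth_in_V by blast

lemma card_L_cycle: "i < l \<Longrightarrow> card (L (xs ! i)) = m"
  using card_L cycle_nth_in_V by blast

definition walks :: "'w \<Rightarrow> nat \<Rightarrow> 'w \<Rightarrow> 'w list set" where
  "walks x j z = {cs. length cs = Suc j \<and> (\<forall>i\<le>j. cs ! i \<in> L (xs ! i)) \<and>
      (\<forall>i<j. {cs ! i, cs ! Suc i} \<notin> EH) \<and> cs ! 0 = x \<and> cs ! j = z}"

fun walk_count :: "'w \<Rightarrow> nat \<Rightarrow> 'w \<Rightarrow> int" where
  "walk_count x 0 z = (if z = x then 1 else 0)"
| "walk_count x (Suc j) z = (\<Sum>y\<in>{y \<in> L (xs ! j). {y, z} \<notin> EH}. walk_count x j y)"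

lemma walk_count_nonneg: "walk_count x j z \<ge> 0"
  by (induction j arbitrary: z) (auto intro: sum_nonneg)

lemma finite_walks:
  assumes "j < l"
  shows "finite (walks x j z)"
proof -
  have "walks x j z \<subseteq> {cs. set cs \<subseteq> VH \<and> length cs = Suc j}"
  proof clarify
    fix cs assume cs: "cs \<in> walks x j z"
    have "y \<in> VH" if y: "y \<in> set cs" for y
    proof -
      obtain i where i: "i < length cs" "y = cs ! i" using y by (auto simp: in_set_conv_nth)
      then have "i \<le> j" "y \<in> L (xs ! i)" using cs unfolding walks_def by auto
      moreover have "i < l" using \<open>i \<le> j\<close> assms by simp
      ultimately show "y \<in> VH" using L_subset_VH cycle_nth_in_V by blast
    qed
    then show "set cs \<subseteq> VH \<and> length cs = Suc j" using cs unfolding walks_def by auto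
  qed
  then show ?thesis using finite_lists_length_eq[OF finite_VH] finite_subset by blast
qed

lemma walks_0: "x \<in> L (xs ! 0) \<Longrightarrow> walks x 0 z = (if z = x then {[x]} else {})"
  unfolding walks_def by (auto simp: length_Suc_conv)

lemma snoc_in_walks:
  assumes z: "z \<in> L (xs ! Suc j)" and y: "{y, z} \<notin> EH" and ds: "ds \<in> walks x j y"
  shows "ds @ [z] \<in> walks x (Suc j) z"
proof -
  have len: "length ds = Suc j" and dL: "\<And>i. i \<le> j \<Longrightarrow> ds ! i \<in> L (xs ! i)"
    and dE: "\<And>i. i < j \<Longrightarrow> {ds ! i, ds ! Suc i} \<notin> EH" and d0: "ds ! 0 = x" and dz: "ds ! j = y"
    using ds unfolding walks_def by auto
  have n1: "\<And>i. i \<le> j \<Longrightarrow> (ds @ [z]) ! i = ds ! i" and n2: "(ds @ [z]) ! Suc j = z"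
    using len by (simp_all add: nth_append)
  show ?thesis
    unfolding walks_def
  proof (intro CollectI conjI allI impI)
    fix i assume "i \<le> Suc j"
    then show "(ds @ [z]) ! i \<in> L (xs ! i)" using n1 n2 dL z by (cases "i = Suc j") auto
  next
    fix i assume "i < Suc j"
    then show "{(ds @ [z]) ! i, (ds @ [z]) ! Suc i} \<notin> EH"
      using n1 n2 dE dz y by (cases "i = j") auto
  qed (use len n1 n2 d0 in auto)
qed

lemma walks_Suc:
  assumes z: "z \<in> L (xs ! Suc j)"
  shows "walks x (Suc j) z = (\<Union>y\<in>{y \<in> L (xs ! j). {y, z} \<notin> EH}. (\<lambda>cs. cs @ [z]) ` walks x j y)"
proof
  show "walks x (Suc j) z \<subseteq> (\<Union>y\<in>{y \<in> L (xs ! j). {y, z} \<notin> EH}. (\<lambda>cs. cs @ [z]) ` walks x j y)"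
  proof
    fix cs assume cs: "cs \<in> walks x (Suc j) z"
    have len: "length cs = Suc (Suc j)" and cL: "\<And>i. i \<le> Suc j \<Longrightarrow> cs ! i \<in> L (xs ! i)"
      and cE: "\<And>i. i < Suc j \<Longrightarrow> {cs ! i, cs ! Suc i} \<notin> EH" and c0: "cs ! 0 = x"
      and cz: "cs ! Suc j = z"
      using cs unfolding walks_def by auto
    have "cs = take (Suc j) cs @ [z]"
      using len cz by (metis lessI take_Suc_conv_app_nth take_all order_refl)
    moreover have "take (Suc j) cs \<in> walks x j (cs ! j)"
      unfolding walks_def using len cL cE c0 by auto
    moreover have "cs ! j \<in> L (xs ! j)" "{cs ! j, z} \<notin> EH" using cL cE[of j] cz by auto
    ultimately show "cs \<in> (\<Union>y\<in>{y \<in> L (xs ! j). {y, z} \<notin> EH}. (\<lambda>cs. cs @ [z]) ` walks x j y)"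
      by blast
  qed
qed (use snoc_in_walks[OF z] in blast)

lemma card_walks:
  assumes "j < l" "x \<in> L (xs ! 0)" "z \<in> L (xs ! j)"
  shows "int (card (walks x j z)) = walk_count x j z"
  using assms
proof (induction j arbitrary: z)
  case 0 then show ?case by (simp add: walks_0)
next
  case (Suc j)
  define Y where "Y = {y \<in> L (xs ! j). {y, z} \<notin> EH}"
  have "finite Y" unfolding Y_def using finite_L_cycle Suc.prems by simp
  have "card (walks x (Suc j) z) = card (\<Union>y\<in>Y. (\<lambda>cs. cs @ [z]) ` walks x j y)"
    using walks_Suc[OF Suc.prems(3)] unfolding Y_def by simp
  also have "\<dots> = (\<Sum>y\<in>Y. card ((\<lambda>cs. cs @ [z]) ` walks x j y))"
    by (rule card_UN_disjoint) (use \<open>finite Y\<close> finite_walks Suc.prems in \<open>auto simp: walks_def\<close>)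
  also have "\<dots> = (\<Sum>y\<in>Y. card (walks x j y))"
    by (intro sum.cong refl card_image) (auto intro: inj_onI)
  finally have "int (card (walks x (Suc j) z)) = (\<Sum>y\<in>Y. int (card (walks x j y)))" by simp
  also have "\<dots> = (\<Sum>y\<in>Y. walk_count x j y)"
    using Suc.IH Suc.prems unfolding Y_def by (intro sum.cong) auto
  finally show ?case unfolding Y_def by simp
qed

definition cycle_lists :: "'w list set" where
  "cycle_lists = {cs. length cs = l \<and> (\<forall>i<l. cs ! i \<in> L (xs ! i)) \<and>
      (\<forall>i<l. {cs ! i, cs ! ((i + 1) mod l)} \<notin> EH)}"

lemma map_colouring_in_cycle_lists:
  assumes c: "c \<in> colourings S"
  shows "map c xs \<in> cycle_lists"
proof -
  have "{c (xs ! i), c (xs ! ((i + 1) mod l))} \<notin> EH" if "i < l" for i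
    using c cycle_edge[OF that] length_pos that unfolding colourings_iff by (auto intro!: nth_mem)
  then show ?thesis
    using c length_pos unfolding cycle_lists_def colourings_iff by auto
qed

lemma cycle_list_colouring:
  assumes cs: "cs \<in> cycle_lists"
  obtains c where "c \<in> colourings S" "map c xs = cs"
proof -
  have len: "length cs = l" and csL: "\<And>i. i < l \<Longrightarrow> cs ! i \<in> L (xs ! i)"
    and csE: "\<And>i. i < l \<Longrightarrow> {cs ! i, cs ! ((i + 1) mod l)} \<notin> EH"
    using cs unfolding cycle_lists_def by auto
  define idx where "idx = the_inv_into {..<l} (nth xs)"
  have inj_nth: "inj_on (nth xs) {..<l}" using distinct_cycle by (simp add: inj_on_nth)
  have idx: "idx u < l" "xs ! idx u = u" if "u \<in> S" for u
    using that inj_nth the_inv_into_into[OF inj_nth] f_the_inv_into_f[OF inj_nth]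
    unfolding idx_def by (auto simp: in_set_conv_nth)
  define c where "c u = (if u \<in> S then cs ! idx u else undefined)" for u
  have cn: "c (xs ! i) = cs ! i" if "i < l" for i
    using the_inv_into_f_f[OF inj_nth] that unfolding c_def idx_def by simp
  have "c \<in> colourings S"
    unfolding colourings_iff
  proof (intro conjI ballI allI impI)
    fix u assume "u \<in> S"
    then show "c u \<in> L u" using csL idx unfolding c_def by fastforce
  next
    fix u w assume u: "u \<in> S" and w: "w \<in> S" and e: "{u, w} \<in> E"
    obtain t where t: "t < l" "{u, w} = {xs ! t, xs ! ((t + 1) mod l)}"
      using edge_within_cycle[OF u w e] .
    have "(t + 1) mod l < l" using length_pos by simp
    then have "{c (xs ! t), c (xs ! ((t + 1) mod l))} \<notin> EH"
      using csE[OF t(1)] cn t(1) by simp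
    moreover have "{c u, c w} = {c (xs ! t), c (xs ! ((t + 1) mod l))}"
      using t(2) by (auto simp: doubleton_eq_iff)
    ultimately show "{c u, c w} \<notin> EH" by simp
  qed (simp add: c_def)
  moreover have "map c xs = cs" using len cn by (intro nth_equalityI) auto
  ultimately show ?thesis by (rule that)
qed

lemma card_colourings_cycle: "card (colourings S) = card cycle_lists"
proof -
  have "inj_on (\<lambda>c. map c xs) (colourings S)"
  proof (rule inj_onI)
    fix c c' assume "c \<in> colourings S" "c' \<in> colourings S" "map c xs = map c' xs"
    then show "c = c'" unfolding colourings_iff by (metis ext map_eq_conv)
  qed
  moreover have "(\<lambda>c. map c xs) ` colourings S = cycle_lists"
  proof
    show "cycle_lists \<subseteq> (\<lambda>c. map c xs) ` colourings S"
      by (metis cycle_list_colouring image_eqI subsetI)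
  qed (use map_colouring_in_cycle_lists in blast)
  ultimately show ?thesis using card_image by metis
qed

lemma cycle_lists_eq_UN_walks:
  "cycle_lists = (\<Union>x\<in>L (xs ! 0). \<Union>z\<in>{z \<in> L (xs ! (l - 1)). {z, x} \<notin> EH}. walks x (l - 1) z)"
proof -
  have l1: "Suc (l - 1) = l" using length_pos by simp
  have wrap: "(l - 1 + 1) mod l = 0" using l1 by simp
  have next_index: "(i + 1) mod l = Suc i" if "i < l - 1" for i using that by simp
  show ?thesis
  proof (intro set_eqI iffI)
    fix cs assume cs: "cs \<in> cycle_lists"
    have len: "length cs = l" and csL: "\<And>i. i < l \<Longrightarrow> cs ! i \<in> L (xs ! i)"
      and csE: "\<And>i. i < l \<Longrightarrow> {cs ! i, cs ! ((i + 1) mod l)} \<notin> EH"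
      using cs unfolding cycle_lists_def by auto
    have "{cs ! i, cs ! Suc i} \<notin> EH" if "i < l - 1" for i
      using csE[of i] next_index[OF that] that by simp
    then have "cs \<in> walks (cs ! 0) (l - 1) (cs ! (l - 1))"
      unfolding walks_def using len l1 csL by auto
    moreover have "cs ! 0 \<in> L (xs ! 0)" "cs ! (l - 1) \<in> L (xs ! (l - 1))"
      using csL length_pos by auto
    moreover have "{cs ! (l - 1), cs ! 0} \<notin> EH" using csE[of "l - 1"] wrap length_pos by simp
    ultimately show "cs \<in> (\<Union>x\<in>L (xs ! 0). \<Union>z\<in>{z \<in> L (xs ! (l - 1)). {z, x} \<notin> EH}. walks x (l - 1) z)"
      by blast
  next
    fix cs assume "cs \<in> (\<Union>x\<in>L (xs ! 0). \<Union>z\<in>{z \<in> L (xs ! (l - 1)). {z, x} \<notin> EH}. walks x (l - 1) z)"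
    then obtain x z where z: "{z, x} \<notin> EH" and cs: "cs \<in> walks x (l - 1) z" by blast
    have len: "length cs = l" and csL: "\<And>i. i \<le> l - 1 \<Longrightarrow> cs ! i \<in> L (xs ! i)"
      and csE: "\<And>i. i < l - 1 \<Longrightarrow> {cs ! i, cs ! Suc i} \<notin> EH"
      and ends: "cs ! 0 = x" "cs ! (l - 1) = z"
      using cs l1 unfolding walks_def by auto
    have "{cs ! i, cs ! ((i + 1) mod l)} \<notin> EH" if "i < l" for i
    proof (cases "i = l - 1")
      case True then show ?thesis using wrap ends z by simp
    next
      case False then show ?thesis using that csE next_index by simp
    qed
    then show "cs \<in> cycle_lists" unfolding cycle_lists_def using len csL by simp
  qed
qed

lemma card_colourings_cycle_walks:
  "int (card (colourings S)) =
    (\<Sum>x\<in>L (xs ! 0). \<Sum>z\<in>{z \<in> L (xs ! (l - 1)). {z, x} \<notin> EH}. walk_count x (l - 1) z)"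
proof -
  have l0: "l - 1 < l" using length_pos by simp
  let ?Z = "\<lambda>x. {z \<in> L (xs ! (l - 1)). {z, x} \<notin> EH}"
  have fin: "finite (L (xs ! 0))" "\<And>x. finite (?Z x)" "\<And>x z. finite (walks x (l - 1) z)"
    using finite_L_cycle[OF length_pos] finite_L_cycle[OF l0] finite_walks[OF l0] by auto
  have "card cycle_lists = (\<Sum>x\<in>L (xs ! 0). card (\<Union>z\<in>?Z x. walks x (l - 1) z))"
    unfolding cycle_lists_eq_UN_walks
    by (rule card_UN_disjoint) (use fin in \<open>auto simp: walks_def\<close>)
  also have "\<dots> = (\<Sum>x\<in>L (xs ! 0). \<Sum>z\<in>?Z x. card (walks x (l - 1) z))"
    by (intro sum.cong refl card_UN_disjoint) (use fin in \<open>auto simp: walks_def\<close>)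
  finally have "int (card cycle_lists) = (\<Sum>x\<in>L (xs ! 0). \<Sum>z\<in>?Z x. int (card (walks x (l - 1) z)))"
    by simp
  also have "\<dots> = (\<Sum>x\<in>L (xs ! 0). \<Sum>z\<in>?Z x. walk_count x (l - 1) z)"
    using card_walks l0 by (intro sum.cong refl) auto
  finally show ?thesis using card_colourings_cycle by simp
qed

definition walk_total :: "'w \<Rightarrow> nat \<Rightarrow> int" where
  "walk_total x j = (\<Sum>z\<in>L (xs ! j). walk_count x j z)"

text \<open>A vertex z of the cover has at most one neighbour in L u, so omitting the neighbours of z
  from a sum over L u loses at most one term.\<close>
lemma sum_non_neighbours_ge:
  fixes f :: "'w \<Rightarrow> int"
  assumes "u \<in> V" "w \<in> V" "{u, w} \<in> E" "z \<in> L w" "m \<ge> 1" "\<And>y. f y \<ge> 0"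
  obtains y where "y \<in> L u" "(\<Sum>y'\<in>{y' \<in> L u. {y', z} \<notin> EH}. f y') \<ge> (\<Sum>y'\<in>L u. f y') - f y"
proof -
  let ?N = "{y' \<in> L u. {y', z} \<in> EH}"
  have "L u \<noteq> {}" using card_L[OF assms(1)] assms(5) by auto
  moreover have "card ?N \<le> 1" by (rule card_cover_neighbours_le_1[OF assms(1-4)])
  ultimately obtain y where y: "y \<in> L u" "?N \<subseteq> {y}"
  proof (cases "?N = {}")
    case False
    then obtain y where "y \<in> ?N" by blast
    then show ?thesis
      using that \<open>card ?N \<le> 1\<close> finite_L[OF assms(1)] by (auto simp: card_le_Suc0_iff_eq)
  qed blast
  have "(\<Sum>y'\<in>{y' \<in> L u. {y', z} \<notin> EH}. f y') = (\<Sum>y'\<in>L u. f y') - (\<Sum>y'\<in>?N. f y')"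
    using finite_L[OF assms(1)] by (subst sum_diff[symmetric]) (auto intro: sum.cong)
  moreover have "(\<Sum>y'\<in>?N. f y') \<le> f y"
    using sum_mono2[OF _ y(2), of f] assms(6) by simp
  ultimately show ?thesis using that y(1) by fastforce
qed

lemma exists_non_neighbour:
  assumes "u \<in> V" "w \<in> V" "{u, w} \<in> E" "Z \<subseteq> L w" "card Z < m"
  obtains y where "y \<in> L u" "\<forall>z\<in>Z. {y, z} \<notin> EH"
proof -
  let ?Y = "\<Union>z\<in>Z. {y \<in> L u. {y, z} \<in> EH}"
  have fin: "finite Z" using assms(4) finite_L[OF assms(2)] finite_subset by blast
  have "card ?Y \<le> (\<Sum>z\<in>Z. card {y \<in> L u. {y, z} \<in> EH})" using fin by (rule card_UN_le)
  also have "\<dots> \<le> (\<Sum>z\<in>Z. 1)"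
    using card_cover_neighbours_le_1[OF assms(1-3)] assms(4) by (intro sum_mono) auto
  finally have "card ?Y < card (L u)" using assms(5) card_L[OF assms(1)] by simp
  moreover have "finite ?Y" by (rule finite_subset[OF _ finite_L[OF assms(1)]]) blast
  ultimately have "\<not> L u \<subseteq> ?Y" using card_mono leD by blast
  then show ?thesis using that by blast
qed

lemma sum_walk_count_Suc:
  assumes "Suc j < l" "Z \<subseteq> L (xs ! Suc j)"
  shows "(\<Sum>z\<in>Z. walk_count x (Suc j) z) =
    (\<Sum>y\<in>L (xs ! j). walk_count x j y * int (card {z \<in> Z. {y, z} \<notin> EH}))"
proof -
  have "finite (L (xs ! j))" "finite Z" using assms finite_L_cycle finite_subset by auto
  then show ?thesis
    using sum_sum_filter_swap[where A = "L (xs ! j)" and Z = Z and P = "\<lambda>y z. {y, z} \<notin> EH"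
        and f = "walk_count x j"] by simp
qed

lemma card_cycle_non_neighbours_ge:
  assumes "Suc j < l" "y \<in> L (xs ! j)"
  shows "int (card {z \<in> L (xs ! Suc j). {y, z} \<notin> EH}) \<ge> int m - 1"
proof -
  have e: "{xs ! Suc j, xs ! j} \<in> E" using cycle_edge_Suc[OF assms(1)] by (simp add: insert_commute)
  have V: "xs ! Suc j \<in> V" "xs ! j \<in> V" using assms(1) cycle_nth_in_V by auto
  have "card {z \<in> L (xs ! Suc j). {z, y} \<notin> EH} \<ge> m - 1"
    by (rule card_cover_non_neighbours_ge[OF V e assms(2)])
  then show ?thesis by (simp add: insert_commute)
qed

lemma walk_total_Suc_ge:
  assumes "Suc j < l"
  shows "walk_total x (Suc j) \<ge> (int m - 1) * walk_total x j"
proof -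
  have "(int m - 1) * walk_count x j y \<le> walk_count x j y * int (card {z \<in> L (xs ! Suc j). {y, z} \<notin> EH})"
    if "y \<in> L (xs ! j)" for y
    using mult_right_mono[OF card_cycle_non_neighbours_ge[OF assms that] walk_count_nonneg[of x j y]]
    by (simp add: mult.commute)
  then show ?thesis
    unfolding walk_total_def sum_walk_count_Suc[OF assms order_refl] sum_distrib_left
    by (rule sum_mono)
qed

text \<open>Dropping one vertex z0 of the last fibre: some vertex y0 of the previous fibre has no neighbour
  among the remaining m - 1 vertices, and every other vertex loses at most one more.\<close>
lemma walk_total_minus_Suc_ge:
  assumes "Suc j < l" "z0 \<in> L (xs ! Suc j)" "m \<ge> 1"
  obtains y0 where "y0 \<in> L (xs ! j)"
    "walk_total x (Suc j) - walk_count x (Suc j) z0 \<ge> (int m - 2) * walk_total x j + walk_count x j y0"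
proof -
  let ?A = "L (xs ! j)" and ?Z = "L (xs ! Suc j) - {z0}"
  let ?c = "\<lambda>y. int (card {z \<in> ?Z. {y, z} \<notin> EH})"
  have finA: "finite ?A" and finB: "finite (L (xs ! Suc j))" using assms(1) finite_L_cycle by auto
  have cardZ: "card ?Z = m - 1" using card_L_cycle[OF assms(1)] assms(2) finB by simp
  obtain y0 where y0: "y0 \<in> ?A" "\<forall>z\<in>?Z. {y0, z} \<notin> EH"
    using exists_non_neighbour[OF cycle_nth_in_V cycle_nth_in_V cycle_edge_Suc[OF assms(1)], of ?Z]
      assms cardZ by auto
  have "{z \<in> ?Z. {y0, z} \<notin> EH} = ?Z" using y0(2) by blast
  then have c_y0: "?c y0 = int m - 1" using cardZ assms(3) by (simp add: of_nat_diff)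
  have c_ge: "?c y \<ge> int m - 2" if "y \<in> ?A" for y
  proof -
    have "{z \<in> ?Z. {y, z} \<notin> EH} = {z \<in> L (xs ! Suc j). {y, z} \<notin> EH} - {z0}" by blast
    then have "card {z \<in> L (xs ! Suc j). {y, z} \<notin> EH} \<le> card {z \<in> ?Z. {y, z} \<notin> EH} + 1"
      using finB by (cases "z0 \<in> {z \<in> L (xs ! Suc j). {y, z} \<notin> EH}") (auto simp: card_Suc_Diff1)
    then show ?thesis using card_cycle_non_neighbours_ge[OF assms(1) that] by linarith
  qed
  have "walk_total x (Suc j) - walk_count x (Suc j) z0 = (\<Sum>z\<in>?Z. walk_count x (Suc j) z)"
    unfolding walk_total_def using finB assms(2) by (simp add: sum_diff1)
  also have "\<dots> = walk_count x j y0 * ?c y0 + (\<Sum>y\<in>?A - {y0}. walk_count x j y * ?c y)"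
    using sum_walk_count_Suc[OF assms(1), of ?Z] finA y0(1) by (simp add: sum.remove)
  also have "\<dots> \<ge> walk_count x j y0 * (int m - 1) + (\<Sum>y\<in>?A - {y0}. walk_count x j y * (int m - 2))"
    using c_y0 c_ge walk_count_nonneg by (intro add_mono sum_mono mult_left_mono) auto
  finally have "walk_total x (Suc j) - walk_count x (Suc j) z0 \<ge>
      walk_count x j y0 * (int m - 1) + (\<Sum>y\<in>?A - {y0}. walk_count x j y) * (int m - 2)"
    by (simp add: sum_distrib_right)
  moreover have "(\<Sum>y\<in>?A - {y0}. walk_count x j y) = walk_total x j - walk_count x j y0"
    unfolding walk_total_def using finA y0(1) by (simp add: sum_diff1)
  ultimately show ?thesis using that y0(1) by (simp add: algebra_simps)
qed

definition walk_bounds :: "'w \<Rightarrow> nat \<Rightarrow> bool" where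
  "walk_bounds x j \<longleftrightarrow> walk_total x j \<ge> (int m - 1) ^ j \<and>
    (\<forall>z\<in>L (xs ! j). walk_total x j - walk_count x j z \<ge> min_walks (int m) (Suc j) \<and>
      walk_count x j z \<ge> min_walks (int m) j)"

lemma walk_bounds_0:
  assumes "x \<in> L (xs ! 0)"
  shows "walk_bounds x 0"
proof -
  have "walk_total x 0 = 1" unfolding walk_total_def using assms finite_L_cycle[OF length_pos] by simp
  then show ?thesis unfolding walk_bounds_def using walk_count_nonneg[of x 0] by auto
qed

lemma walk_bounds_Suc:
  assumes m: "m \<ge> 2" and j: "Suc j < l" and IH: "walk_bounds x j"
  shows "walk_bounds x (Suc j)"
proof -
  have total: "walk_total x j \<ge> (int m - 1) ^ j"
    and minus: "\<And>y. y \<in> L (xs ! j) \<Longrightarrow> walk_total x j - walk_count x j y \<ge> min_walks (int m) (Suc j)"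
    and count: "\<And>y. y \<in> L (xs ! j) \<Longrightarrow> walk_count x j y \<ge> min_walks (int m) j"
    using IH unfolding walk_bounds_def by auto
  have "(int m - 1) * (int m - 1) ^ j \<le> (int m - 1) * walk_total x j"
    using total m by (intro mult_left_mono) auto
  then have "walk_total x (Suc j) \<ge> (int m - 1) ^ Suc j"
    using walk_total_Suc_ge[OF j, of x] by simp
  moreover have "walk_total x (Suc j) - walk_count x (Suc j) z \<ge> min_walks (int m) (Suc (Suc j))"
    if z: "z \<in> L (xs ! Suc j)" for z
  proof -
    obtain y0 where y0: "y0 \<in> L (xs ! j)" and
      ge: "walk_total x (Suc j) - walk_count x (Suc j) z \<ge> (int m - 2) * walk_total x j + walk_count x j y0"
      using walk_total_minus_Suc_ge[OF j z] m by auto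
    have "(int m - 2) * walk_total x j \<ge> (int m - 2) * (int m - 1) ^ j"
      using total m by (intro mult_left_mono) auto
    then show ?thesis using ge count[OF y0] by simp
  qed
  moreover have "walk_count x (Suc j) z \<ge> min_walks (int m) (Suc j)" if z: "z \<in> L (xs ! Suc j)" for z
  proof -
    obtain y where y: "y \<in> L (xs ! j)"
      and "(\<Sum>y'\<in>{y' \<in> L (xs ! j). {y', z} \<notin> EH}. walk_count x j y') \<ge> walk_total x j - walk_count x j y"
      using sum_non_neighbours_ge[OF cycle_nth_in_V cycle_nth_in_V cycle_edge_Suc[OF j] z, of "walk_count x j"]
        j m walk_count_nonneg unfolding walk_total_def by auto
    then show ?thesis using minus[OF y] by simp
  qed
  ultimately show ?thesis unfolding walk_bounds_def by simp
qed

lemma walk_bounds_hold: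
  assumes "m \<ge> 2" "x \<in> L (xs ! 0)" "j < l"
  shows "walk_bounds x j"
  using assms(3)
proof (induction j)
  case 0 then show ?case using walk_bounds_0[OF assms(2)] by simp
next
  case (Suc j) then show ?case using walk_bounds_Suc[OF assms(1)] by simp
qed

lemma card_colourings_cycle_ge:
  assumes m: "m \<ge> 2"
  shows "int (card (colourings S)) \<ge> (int m - 1) ^ l - (if even l then 1 else int m - 1)"
proof -
  have l0: "l - 1 < l" and l1: "Suc (l - 1) = l" using length_pos by auto
  have each: "(\<Sum>z\<in>{z \<in> L (xs ! (l - 1)). {z, x} \<notin> EH}. walk_count x (l - 1) z) \<ge> min_walks (int m) l"
    if x: "x \<in> L (xs ! 0)" for x
  proof -
    obtain z where z: "z \<in> L (xs ! (l - 1))" and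
      "(\<Sum>z'\<in>{z' \<in> L (xs ! (l - 1)). {z', x} \<notin> EH}. walk_count x (l - 1) z') \<ge>
        walk_total x (l - 1) - walk_count x (l - 1) z"
      using sum_non_neighbours_ge[OF cycle_nth_in_V[OF l0] cycle_nth_in_V[OF length_pos] cycle_edge_last x,
          of "walk_count x (l - 1)"] m walk_count_nonneg unfolding walk_total_def by auto
    then show ?thesis using walk_bounds_hold[OF m x l0] z l1 unfolding walk_bounds_def by auto
  qed
  have "(\<Sum>x\<in>L (xs ! 0). min_walks (int m) l) \<le>
      (\<Sum>x\<in>L (xs ! 0). \<Sum>z\<in>{z \<in> L (xs ! (l - 1)). {z, x} \<notin> EH}. walk_count x (l - 1) z)"
    by (rule sum_mono) (rule each)
  then show ?thesis
    unfolding card_colourings_cycle_walks min_walks_closed[symmetric]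
    using card_L_cycle[OF length_pos] by simp
qed

end

section \<open>The extremal covers\<close>

context unicyclic_graph
begin

lemma cycle_ends: "cycle_last \<noteq> cycle_first" "cycle_last \<in> V" "cycle_first \<in> V"
proof -
  have "l - 1 \<noteq> 0" "l - 1 < l" using length_ge_3 by linarith+
  then show "cycle_last \<noteq> cycle_first" using distinct_cycle length_pos by (simp add: nth_eq_iff_index_eq)
  show "cycle_last \<in> V" "cycle_first \<in> V" using \<open>l - 1 < l\<close> length_pos cycle_nth_in_V by auto
qed

lemma cycle_edge_Suc_not_closing:
  assumes "Suc j < l"
  shows "{xs ! j, xs ! Suc j} \<noteq> {cycle_last, cycle_first}" "xs ! j \<noteq> xs ! Suc j"
proof -
  have d: "xs ! a = xs ! b \<longleftrightarrow> a = b" if "a < l" "b < l" for a b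
    using distinct_cycle that by (simp add: nth_eq_iff_index_eq)
  have l: "0 < l" "l - 1 < l" "Suc 0 \<noteq> l - 1" using length_ge_3 by auto
  show "xs ! j \<noteq> xs ! Suc j" using d[of j "Suc j"] assms by simp
  have "xs ! j \<noteq> cycle_last" using d[of j "l - 1"] assms by simp
  moreover have "xs ! j = cycle_first \<Longrightarrow> xs ! Suc j \<noteq> cycle_last"
    using d[of j 0] d[of "Suc j" "l - 1"] assms l by auto
  ultimately show "{xs ! j, xs ! Suc j} \<noteq> {cycle_last, cycle_first}" by (auto simp: doubleton_eq_iff)
qed

text \<open>Untwisted, its colourings are
  the proper m-colourings of G; twisted, it is the cover minimising the number of colourings when
  the cycle is even.\<close>
definition canonical_edges :: "nat \<Rightarrow> bool \<Rightarrow> ('v \<times> nat) set set" where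
  "canonical_edges m tw =
     {{(u, i), (u, j)} | u i j. u \<in> V \<and> i < m \<and> j < m \<and> i \<noteq> j}
   \<union> {{(u, i), (w, i)} | u w i. {u, w} \<in> E \<and> {u, w} \<noteq> {cycle_last, cycle_first} \<and> i < m}
   \<union> {{(cycle_last, i), (cycle_first, twist tw m i)} | i. i < m}"

lemma canonical_edges_cases:
  assumes "e \<in> canonical_edges m tw"
  obtains (fibre) u i j where "e = {(u, i), (u, j)}" "u \<in> V" "i < m" "j < m" "i \<noteq> j"
    | (identity) u w k where "e = {(u, k), (w, k)}" "{u, w} \<in> E" "{u, w} \<noteq> {cycle_last, cycle_first}" "k < m"
    | (closing) k where "e = {(cycle_last, k), (cycle_first, twist tw m k)}" "k < m"
  using assms unfolding canonical_edges_def
  by (elim UnE CollectE exE conjE) (rule fibre identity closing; assumption)+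

lemma canonical_edges_iff:
  assumes uw: "u \<noteq> w"
  shows "{(u, i), (w, j)} \<in> canonical_edges m tw \<longleftrightarrow> i < m \<and> j < m \<and> {u, w} \<in> E \<and>
     (if {u, w} = {cycle_last, cycle_first}
      then (if u = cycle_last then j = twist tw m i else i = twist tw m j) else i = j)"
    (is "_ \<longleftrightarrow> ?rhs")
proof
  assume "{(u, i), (w, j)} \<in> canonical_edges m tw"
  then show ?rhs
  proof (cases rule: canonical_edges_cases)
    case fibre then show ?thesis using uw by (auto simp: doubleton_eq_iff)
  next
    case identity then show ?thesis using uw by (auto simp: doubleton_eq_iff insert_commute)
  next
    case closing then show ?thesis
      using uw cycle_ends cycle_edge_last twist_less by (auto simp: doubleton_eq_iff insert_commute)
  qed
next
  assume H: ?rhs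
  show "{(u, i), (w, j)} \<in> canonical_edges m tw"
  proof (cases "{u, w} = {cycle_last, cycle_first}")
    case False
    then have "i = j" using H by simp
    then show ?thesis unfolding canonical_edges_def using H False by blast
  next
    case True
    then consider "u = cycle_last" "w = cycle_first" | "u = cycle_first" "w = cycle_last"
      by (auto simp: doubleton_eq_iff)
    then show ?thesis
    proof cases
      case 1
      then have "j = twist tw m i" using H True by simp
      then show ?thesis unfolding canonical_edges_def using H 1 by blast
    next
      case 2
      then have "{(u, i), (w, j)} = {(cycle_last, j), (cycle_first, twist tw m j)}"
        using H cycle_ends(1) by (auto simp: insert_commute)
      then show ?thesis unfolding canonical_edges_def using H by blast
    qed
  qed
qed

lemma canonical_edges_matching:
  assumes "u \<in> V" "w \<in> V" "{u, w} \<in> E"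
  shows "is_matching (edges_between (canonical_edges m tw) ({u} \<times> {..<m}) ({w} \<times> {..<m}))"
  unfolding is_matching_def
proof (intro ballI impI)
  have uw: "u \<noteq> w" using assms(3) no_loop by blast
  fix e1 e2
  assume e: "e1 \<in> edges_between (canonical_edges m tw) ({u} \<times> {..<m}) ({w} \<times> {..<m})"
    "e2 \<in> edges_between (canonical_edges m tw) ({u} \<times> {..<m}) ({w} \<times> {..<m})" and ne: "e1 \<noteq> e2"
  obtain i j i' j' where e12: "e1 = {(u, i), (w, j)}" "e2 = {(u, i'), (w, j')}"
    and in_edges: "{(u, i), (w, j)} \<in> canonical_edges m tw" "{(u, i'), (w, j')} \<in> canonical_edges m tw"
    using e unfolding edges_between_def by blast
  have "i = i' \<longleftrightarrow> j = j'"
    using in_edges[unfolded canonical_edges_iff[OF uw]] twist_inj[where m = m and tw = tw] by (auto split: if_splits)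
  then show "e1 \<inter> e2 = {}" using e12 ne uw by auto
qed

lemma canonical_is_cover: "is_m_fold_cover V E m (\<lambda>u. {u} \<times> {..<m}) (V \<times> {..<m}) (canonical_edges m tw)"
  unfolding is_m_fold_cover_def is_cover_def
proof (intro conjI ballI impI)
  show "simple_graph (V \<times> {..<m}) (canonical_edges m tw)"
    unfolding simple_graph_def
  proof (intro conjI ballI)
    show "finite (V \<times> {..<m})" using finite_V by simp
    fix e assume "e \<in> canonical_edges m tw"
    then show "\<exists>x y. x \<noteq> y \<and> x \<in> V \<times> {..<m} \<and> y \<in> V \<times> {..<m} \<and> e = {x, y}"
    proof (cases rule: canonical_edges_cases)
      case (identity u w)
      then show ?thesis using simple_graph_edgeD[OF simple, of u w] by blast
    next
      case (closing k) then show ?thesis using cycle_ends twist_less[of k m tw] by blast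
    qed blast
  qed
  show "V \<times> {..<m} = (\<Union>u\<in>V. {u} \<times> {..<m})" by blast
  fix u w assume u: "u \<in> V" and w: "w \<in> V"
  show "u \<noteq> w \<Longrightarrow> {u} \<times> {..<m} \<inter> {w} \<times> {..<m} = {}" by blast
  show "edges_between (canonical_edges m tw) ({u} \<times> {..<m}) ({w} \<times> {..<m}) \<noteq> {} \<Longrightarrow> u = w \<or> {u, w} \<in> E"
    unfolding edges_between_def using canonical_edges_iff[of u w] by (cases "u = w") auto
  show "{u, w} \<in> E \<Longrightarrow> is_matching (edges_between (canonical_edges m tw) ({u} \<times> {..<m}) ({w} \<times> {..<m}))"
    by (rule canonical_edges_matching[OF u w])
next
  fix u x y assume "u \<in> V" "x \<in> {u} \<times> {..<m}" "y \<in> {u} \<times> {..<m}" "x \<noteq> y"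
  then obtain i j where "x = (u, i)" "y = (u, j)" "i < m" "j < m" "i \<noteq> j" by blast
  then show "{x, y} \<in> canonical_edges m tw"
    unfolding canonical_edges_def using \<open>u \<in> V\<close> by (intro UnI1) blast
next
  fix u assume "u \<in> V" then show "card ({u} \<times> {..<m}) = m" by (simp add: card_cartesian_product)
qed

end

locale canonical_cover = unicyclic_graph V E xs for V :: "'v set" and E xs +
  fixes m :: nat and tw :: bool

sublocale canonical_cover \<subseteq> unicyclic_cover V E xs m "\<lambda>u. {u} \<times> {..<m}" "V \<times> {..<m}" "canonical_edges m tw"
  by unfold_locales (rule canonical_is_cover)

context canonical_cover
begin

lemma canonical_leaf_choices:
  assumes ext: "connected_extension W" and v: "v \<in> V - W" and p: "p \<in> W" "{v, p} \<in> E"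
    and c: "c \<in> colourings W"
  shows "card {y \<in> {v} \<times> {..<m}. {y, c p} \<notin> canonical_edges m tw} = m - 1"
proof -
  have vp: "v \<noteq> p" using p v by blast
  obtain i where i: "c p = (p, i)" "i < m" using c p unfolding colourings_iff by fastforce
  have "cycle_last \<in> S" "cycle_first \<in> S" using length_pos by auto
  then have not_closing: "{v, p} \<noteq> {cycle_last, cycle_first}"
    using v ext unfolding connected_extension_def by (auto simp: doubleton_eq_iff)
  have "{y \<in> {v} \<times> {..<m}. {y, c p} \<notin> canonical_edges m tw} = {v} \<times> ({..<m} - {i})"
    using canonical_edges_iff[OF vp] not_closing p(2) i by auto
  then show ?thesis using i(2) by (simp add: card_cartesian_product)
qed

lemma card_canonical_colourings: "card (colourings V) = (m - 1) ^ (card V - l) * card (colourings S)"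
proof -
  have "card (colourings V) = (m - 1) ^ (card V - card S) * card (colourings S)"
    by (rule card_colourings_eq[OF connected_extension_cycle]) (rule canonical_leaf_choices)
  then show ?thesis using card_cycle by simp
qed

lemma canonical_walk_count:
  assumes i0: "i0 < m" and j: "j < l" and i: "i < m"
  shows "walk_count (cycle_first, i0) j (xs ! j, i) = path_count (int m) j + (if i = i0 then (-1) ^ j else 0)"
  using j i
proof (induction j arbitrary: i)
  case (Suc j)
  have ne: "xs ! j \<noteq> xs ! Suc j" and not_closing: "{xs ! j, xs ! Suc j} \<noteq> {cycle_last, cycle_first}"
    using cycle_edge_Suc_not_closing[OF Suc.prems(1)] by auto
  have "{y \<in> {xs ! j} \<times> {..<m}. {y, (xs ! Suc j, i)} \<notin> canonical_edges m tw} =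
      (\<lambda>i'. (xs ! j, i')) ` ({..<m} - {i})"
    using canonical_edges_iff[OF ne] not_closing cycle_edge_Suc[OF Suc.prems(1)] Suc.prems(2) by auto
  then have "walk_count (cycle_first, i0) (Suc j) (xs ! Suc j, i) =
      (\<Sum>i'\<in>{..<m} - {i}. walk_count (cycle_first, i0) j (xs ! j, i'))"
    by (simp add: sum.reindex inj_on_def)
  also have "\<dots> = (\<Sum>i'\<in>{..<m} - {i}. path_count (int m) j + (if i' = i0 then (-1) ^ j else 0))"
    using Suc by (intro sum.cong) auto
  also have "\<dots> = path_count (int m) (Suc j) + (if i = i0 then (-1) ^ Suc j else 0)"
    using sum_remove_indicator[OF i0 Suc.prems(2)] path_count_closed[of "int m" j] by simp
  finally show ?case .
qed simp

text \<open>Closing the walks along the edge from cycle_last to cycle_first: the twist moves the forbidden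
  end colour away from the start colour i0.\<close>
lemma canonical_closing_sum:
  assumes m: "m \<ge> 2" and i0: "i0 < m"
  shows "(\<Sum>z\<in>{z \<in> {cycle_last} \<times> {..<m}. {z, (cycle_first, i0)} \<notin> canonical_edges m tw}.
            walk_count (cycle_first, i0) (l - 1) z) =
         (int m - 1) * path_count (int m) (l - 1) + (if tw then (-1) ^ (l - 1) else 0)"
proof -
  define k where "k = (if tw then (if i0 = 0 then m - 1 else i0 - 1) else i0)"
  have k: "k < m" "twist tw m k = i0" and k_eq: "k = i0 \<longleftrightarrow> \<not> tw"
    using i0 m unfolding k_def twist_def by (auto simp: mod_Suc)
  have "{z \<in> {cycle_last} \<times> {..<m}. {z, (cycle_first, i0)} \<notin> canonical_edges m tw} =
      (\<lambda>i. (cycle_last, i)) ` ({..<m} - {k})"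
    using canonical_edges_iff[OF cycle_ends(1)] cycle_edge_last i0 k twist_inj[where m = m and tw = tw]
    by auto
  then have "(\<Sum>z\<in>{z \<in> {cycle_last} \<times> {..<m}. {z, (cycle_first, i0)} \<notin> canonical_edges m tw}.
            walk_count (cycle_first, i0) (l - 1) z) =
      (\<Sum>i\<in>{..<m} - {k}. walk_count (cycle_first, i0) (l - 1) (cycle_last, i))"
    by (simp add: sum.reindex inj_on_def)
  also have "\<dots> = (\<Sum>i\<in>{..<m} - {k}. path_count (int m) (l - 1) + (if i = i0 then (-1) ^ (l - 1) else 0))"
    using canonical_walk_count[OF i0] length_pos by (intro sum.cong) auto
  also have "\<dots> = int m * path_count (int m) (l - 1) + (-1) ^ (l - 1) -
      (path_count (int m) (l - 1) + (if k = i0 then (-1) ^ (l - 1) else 0))"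
    by (rule sum_remove_indicator[OF i0 k(1)])
  also have "\<dots> = (int m - 1) * path_count (int m) (l - 1) + (if tw then (-1) ^ (l - 1) else 0)"
    using k_eq by (auto simp: algebra_simps)
  finally show ?thesis .
qed

lemma card_canonical_colourings_cycle:
  assumes m: "m \<ge> 2" and parity: "tw \<longleftrightarrow> even l"
  shows "int (card (colourings S)) = (int m - 1) ^ l - (if even l then 1 else int m - 1)"
proof -
  let ?A = "path_count (int m) (l - 1)" and ?e = "(-1 :: int) ^ (l - 1)"
  have "int (card (colourings S)) = (\<Sum>x\<in>{cycle_first} \<times> {..<m}. (int m - 1) * ?A + (if tw then ?e else 0))"
    unfolding card_colourings_cycle_walks using canonical_closing_sum[OF m] by (intro sum.cong) auto
  also have "\<dots> = int m * ((int m - 1) * ?A + (if tw then ?e else 0))"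
    by (simp add: card_cartesian_product)
  also have "\<dots> = (int m - 1) ^ l - (if even l then 1 else int m - 1)"
  proof -
    have l1: "Suc (l - 1) = l" using length_pos by simp
    have A: "(int m - 1) ^ (l - 1) - ?e = int m * ?A" using path_count_closed[of "int m" "l - 1"] by simp
    have pw: "(int m - 1) ^ l = (int m - 1) * (int m - 1) ^ (l - 1)" by (metis l1 power_Suc)
    have e: "?e = (if even l then -1 else 1)" using length_pos by (cases "even l") auto
    have "int m * ((int m - 1) * ?A + (if tw then ?e else 0)) =
        (int m - 1) * ((int m - 1) ^ (l - 1) - ?e) + (if tw then int m * ?e else 0)"
      unfolding A by (simp add: algebra_simps)
    also have "\<dots> = (int m - 1) ^ l - (if even l then 1 else int m - 1)"
      unfolding pw e using parity by (simp add: algebra_simps)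
    finally show ?thesis .
  qed
  finally show ?thesis .
qed

lemma chrom_poly_eq_card_colourings:
  assumes "\<not> tw"
  shows "chrom_poly V E m = card (colourings V)"
proof -
  define CH where "CH = {f \<in> V \<rightarrow>\<^sub>E {..<m}. \<forall>u v. {u, v} \<in> E \<longrightarrow> f u \<noteq> f v}"
  have adjacent: "{(u, i), (w, j)} \<in> canonical_edges m tw \<longleftrightarrow> i < m \<and> j < m \<and> {u, w} \<in> E \<and> i = j"
    if "u \<noteq> w" for u w i j
    using canonical_edges_iff[OF that, of i j m tw] assms unfolding twist_def by auto
  have "bij_betw (\<lambda>f u. if u \<in> V then (u, f u) else undefined) CH (colourings V)"
  proof (rule bij_betwI[where g = "\<lambda>c u. if u \<in> V then snd (c u) else undefined"])
    show "(\<lambda>f u. if u \<in> V then (u, f u) else undefined) \<in> CH \<rightarrow> colourings V"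
    proof
      fix f assume "f \<in> CH"
      then have fm: "\<And>u. u \<in> V \<Longrightarrow> f u < m" and fp: "\<And>u w. {u, w} \<in> E \<Longrightarrow> f u \<noteq> f w"
        unfolding CH_def by auto
      have "{(u, f u), (w, f w)} \<notin> canonical_edges m tw" if "{u, w} \<in> E" for u w
        using adjacent[OF simple_graph_edgeD(1)[OF simple that]] fp[OF that] by simp
      then show "(\<lambda>u. if u \<in> V then (u, f u) else undefined) \<in> colourings V"
        unfolding colourings_iff using fm by auto
    qed
    show "(\<lambda>c u. if u \<in> V then snd (c u) else undefined) \<in> colourings V \<rightarrow> CH"
    proof
      fix c assume c: "c \<in> colourings V"
      then have cu: "c u = (u, snd (c u))" "snd (c u) < m" if "u \<in> V" for u
        using that unfolding colourings_iff by fastforce+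
      have "snd (c u) \<noteq> snd (c w)" if "{u, w} \<in> E" for u w
        using c simple_graph_edgeD[OF simple that] cu adjacent[of u w "snd (c u)" "snd (c w)"] that
        unfolding colourings_iff by (metis (no_types, lifting))
      then show "(\<lambda>u. if u \<in> V then snd (c u) else undefined) \<in> CH"
        unfolding CH_def using cu simple_graph_edgeD[OF simple] by auto
    qed
    show "(\<lambda>u. if u \<in> V then snd ((\<lambda>u. if u \<in> V then (u, f u) else undefined) u) else undefined) = f"
      if "f \<in> CH" for f
      using that unfolding CH_def by (auto simp: PiE_def extensional_def)
    show "(\<lambda>u. if u \<in> V then (u, (\<lambda>u. if u \<in> V then snd (c u) else undefined) u) else undefined) = c"
      if "c \<in> colourings V" for c
      using that unfolding colourings_iff by fastforce
  qed
  then show ?thesis unfolding chrom_poly_def CH_def[symmetric] by (rule bij_betw_same_card)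
qed

end

section \<open>The DP colour function of a unicyclic graph\<close>

context unicyclic_graph
begin

lemma P_DP_cover_ge:
  fixes L :: "'v \<Rightarrow> 'w set"
  assumes m: "m \<ge> 2" and cover: "is_m_fold_cover V E m L VH EH"
  shows "int (P_DP_cover V (VH, EH)) \<ge>
    (int m - 1) ^ (card V - l) * ((int m - 1) ^ l - (if even l then 1 else int m - 1))"
proof -
  interpret unicyclic_cover V E xs m L VH EH by unfold_locales (rule cover)
  have "(m - 1) ^ (card V - l) * card (colourings S) \<le> card (colourings V)"
    using card_colourings_ge[OF connected_extension_cycle] card_cycle by simp
  then have "int ((m - 1) ^ (card V - l) * card (colourings S)) \<le> int (card (colourings V))"
    by (simp only: of_nat_le_iff)
  then have "(int m - 1) ^ (card V - l) * int (card (colourings S)) \<le> int (P_DP_cover V (VH, EH))"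
    unfolding P_DP_cover_eq_card_colourings using m by (simp add: of_nat_diff)
  moreover have "(int m - 1) ^ (card V - l) * ((int m - 1) ^ l - (if even l then 1 else int m - 1))
      \<le> (int m - 1) ^ (card V - l) * int (card (colourings S))"
    using card_colourings_cycle_ge[OF m] m by (intro mult_left_mono) auto
  ultimately show ?thesis by linarith
qed

lemma P_DP_cover_canonical:
  assumes m: "m \<ge> 2" and "tw \<longleftrightarrow> even l"
  shows "int (P_DP_cover V (V \<times> {..<m}, canonical_edges m tw)) =
    (int m - 1) ^ (card V - l) * ((int m - 1) ^ l - (if even l then 1 else int m - 1))"
proof -
  interpret canonical_cover V E xs m tw by unfold_locales
  show ?thesis
    using P_DP_cover_eq_card_colourings card_canonical_colourings card_canonical_colourings_cycle[OF assms] m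
    by (simp add: of_nat_diff)
qed

lemma P_DP_le_canonical: "P_DP V E m \<le> P_DP_cover V (V \<times> {..<m}, canonical_edges m tw)"
  unfolding P_DP_def using canonical_is_cover by (intro cInf_lower) blast+

lemma P_DP_attained:
  obtains L :: "'v \<Rightarrow> ('v \<times> nat) set" and VH EH
  where "is_m_fold_cover V E m L VH EH" "P_DP V E m = P_DP_cover V (VH, EH)"
proof -
  let ?C = "{P_DP_cover V (VH, EH) | (L :: 'v \<Rightarrow> ('v \<times> nat) set) VH EH. is_m_fold_cover V E m L VH EH}"
  have "?C \<noteq> {}" using canonical_is_cover by blast
  then have "Inf ?C \<in> ?C" by (rule Inf_nat_def1)
  then show ?thesis using that unfolding P_DP_def by blast
qed

lemma P_DP_eq:
  assumes m: "m \<ge> 2"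
  shows "int (P_DP V E m) = (int m - 1) ^ (card V - l) * ((int m - 1) ^ l - (if even l then 1 else int m - 1))"
proof (rule antisym)
  show "int (P_DP V E m) \<le> (int m - 1) ^ (card V - l) * ((int m - 1) ^ l - (if even l then 1 else int m - 1))"
    using P_DP_le_canonical[of m "even l"] P_DP_cover_canonical[OF m, of "even l"] by simp
  obtain L :: "'v \<Rightarrow> ('v \<times> nat) set" and VH EH
    where cover: "is_m_fold_cover V E m L VH EH" and eq: "P_DP V E m = P_DP_cover V (VH, EH)"
    by (rule P_DP_attained)
  show "int (P_DP V E m) \<ge> (int m - 1) ^ (card V - l) * ((int m - 1) ^ l - (if even l then 1 else int m - 1))"
    unfolding eq by (rule P_DP_cover_ge[OF m cover])
qed

lemma chrom_poly_eq_canonical: "chrom_poly V E m = P_DP_cover V (V \<times> {..<m}, canonical_edges m False)"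
proof -
  interpret canonical_cover V E xs m False by unfold_locales
  show ?thesis using chrom_poly_eq_card_colourings P_DP_cover_eq_card_colourings by simp
qed

lemma chrom_poly_le_1:
  assumes "m \<le> 1"
  shows "chrom_poly V E m = 0"
proof -
  have "f (xs ! 0) = f (xs ! 1)" if f: "f \<in> V \<rightarrow>\<^sub>E {..<m}" for f
  proof -
    have "xs ! 0 \<in> V" "xs ! 1 \<in> V" using cycle_ends(3) cycle_nth_in_V[of 1] length_ge_3 by auto
    then have "f (xs ! 0) < m" "f (xs ! 1) < m" using f by auto
    then show ?thesis using assms by simp
  qed
  moreover have "{xs ! 0, xs ! 1} \<in> E" using cycle_edge_Suc[of 0] length_ge_3 by simp
  ultimately have "{f \<in> V \<rightarrow>\<^sub>E {..<m}. \<forall>u v. {u, v} \<in> E \<longrightarrow> f u \<noteq> f v} = {}" by blast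
  then show ?thesis unfolding chrom_poly_def by (metis card.empty)
qed

theorem P_DP_odd_cycle:
  assumes "odd l"
  shows "P_DP V E m = chrom_poly V E m"
proof (cases "m \<ge> 2")
  case True
  have "int (P_DP V E m) = int (chrom_poly V E m)"
    using P_DP_eq[OF True] P_DP_cover_canonical[OF True, of False] assms chrom_poly_eq_canonical by simp
  then show ?thesis by simp
next
  case False
  then show ?thesis using P_DP_le_canonical[of m False] chrom_poly_eq_canonical chrom_poly_le_1 by simp
qed

theorem P_DP_even_cycle:
  assumes "even l" "m \<ge> 2"
  shows "int (P_DP V E m) = (int m - 1) ^ card V - (int m - 1) ^ (card V - l)"
proof -
  have "(int m - 1) ^ (card V - l) * (int m - 1) ^ l = (int m - 1) ^ card V"
    using length_le_card_V by (simp flip: power_add)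
  then show ?thesis using P_DP_eq[OF assms(2)] assms(1) by (simp add: right_diff_distrib)
qed

end

theorem mainTheorem5:
  fixes V :: "'v set" and E :: "'v set set" and xs :: "'v list" and k :: nat
  assumes "unicyclic V E" and "is_cycle V E xs"
  shows "(length xs = 2 * k + 1 \<longrightarrow> (\<forall>m. P_DP V E m = chrom_poly V E m)) \<and>
         (length xs = 2 * k + 2 \<longrightarrow> (\<forall>m \<ge> 2.
             int (P_DP V E m) = (int m - 1) ^ card V - (int m - 1) ^ (card V - (2 * k + 2))))"
proof -
  interpret unicyclic_graph V E xs using assms by unfold_locales
  show ?thesis using P_DP_odd_cycle P_DP_even_cycle by auto
qed

end
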